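(* Let $x_a,x_b\in\mathbb{R}$ and $U=\{x\in C^1[a,b]: x(a)=x_a,\ x(b)=x_b\}$. If $x$ is a local minimizer of $J(x)=\int_a^b L(t,x(t),{}^CD_{a+}^{\alpha,\rho}x(t))\,dt$ on $U$, then for all $t\in[a,b]$ $$\partial_2L(t,x(t),{}^CD_{a+}^{\alpha,\rho} x(t))-D_{b-}^{\alpha,\rho}\big(\partial_3L(t,x(t),{}^CD_{a+}^{\alpha,\rho} x(t))\big)=0.$$
   Context: Fix $0<a<b<\infty$, $\alpha\in(0,1)$, $\rho>0$. For $x\in C^1[a,b]$, ${}^CD_{a+}^{\alpha,\rho} x(t)=\frac{\rho^\alpha}{\Gamma(1-\alpha)}\, t^{1-\rho}\frac{d}{dt}\int_a^t \frac{\tau^{\rho-1}}{(t^\rho-\tau^\rho)^\alpha}[x(\tau)-x(a)]\,d\tau=\frac{\rho^\alpha}{\Gamma(1-\alpha)}\int_a^t (t^\rho-\tau^\rho)^{-\alpha}x'(\tau)\,d\tau$. For a function $f$ on $[a,b]$, $D_{b-}^{\alpha,\rho} f(t)=\frac{\rho^\alpha}{\Gamma(1-\alpha)}\frac{d}{dt}\int_t^b (\tau^\rho-t^\rho)^{-\alpha}f(\tau)\,d\tau$. $\partial_i$ denotes the partial derivative with respect to the $i$-th argument. $L:[a,b]\times\mathbb{R}^2\to\mathbb{R}$ is continuously differentiable with respect to its second and third arguments, and for every $x\in C^1[a,b]$ the map $t\mapsto D_{b-}^{\alpha,\rho}(\partial_3L(t,x(t),{}^CD_{a+}^{\alpha,\rho}x(t)))$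 is continuous. $C^1[a,b]$ carries the norm $\|x\|=\max_{[a,b]}|x|+\max_{[a,b]}|{}^CD_{a+}^{\alpha,\rho}x|$, and $x$ is a local minimizer of $J$ on a set $D\subseteq C^1[a,b]$ if there is $\delta>0$ with $J(x)\le J(y)$ for all $y\in D$ with $\|y-x\|<\delta$. *)

theory Defs
  imports "HOL-Analysis.Analysis"
begin

definition C1_on :: "real \<Rightarrow> real \<Rightarrow> (real \<Rightarrow> real) \<Rightarrow> bool" where
  "C1_on a b x \<longleftrightarrow> (\<exists>x'. continuous_on {a..b} x' \<and>
      (\<forall>t\<in>{a..b}. (x has_real_derivative x' t) (at t within {a..b})))"

definition caputo :: "real \<Rightarrow> real \<Rightarrow> real \<Rightarrow> real \<Rightarrow> (real \<Rightarrow> real) \<Rightarrow> real \<Rightarrow> real" where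
  "caputo \<alpha> \<rho> a b x t = \<rho> powr \<alpha> / Gamma (1 - \<alpha>) *
     integral {a..t} (\<lambda>\<tau>. (t powr \<rho> - \<tau> powr \<rho>) powr (- \<alpha>) *
        vector_derivative x (at \<tau> within {a..b}))"

definition right_int :: "real \<Rightarrow> real \<Rightarrow> real \<Rightarrow> (real \<Rightarrow> real) \<Rightarrow> real \<Rightarrow> real" where
  "right_int \<alpha> \<rho> b f t = integral {t..b} (\<lambda>\<tau>. (\<tau> powr \<rho> - t powr \<rho>) powr (- \<alpha>) * f \<tau>)"

definition rightD :: "real \<Rightarrow> real \<Rightarrow> real \<Rightarrow> real \<Rightarrow> (real \<Rightarrow> real) \<Rightarrow> real \<Rightarrow> real" where
  "rightD \<alpha> \<rho> a b f t = \<rho> powr \<alpha> / Gamma (1 - \<alpha>) *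
     vector_derivative (right_int \<alpha> \<rho> b f) (at t within {a..b})"

definition C1norm :: "real \<Rightarrow> real \<Rightarrow> real \<Rightarrow> real \<Rightarrow> (real \<Rightarrow> real) \<Rightarrow> real" where
  "C1norm \<alpha> \<rho> a b x = (SUP t\<in>{a..b}. \<bar>x t\<bar>) + (SUP t\<in>{a..b}. \<bar>caputo \<alpha> \<rho> a b x t\<bar>)"

definition functional_J :: "real \<Rightarrow> real \<Rightarrow> real \<Rightarrow> real \<Rightarrow> (real \<Rightarrow> real \<Rightarrow> real \<Rightarrow> real)
    \<Rightarrow> (real \<Rightarrow> real) \<Rightarrow> real" where
  "functional_J \<alpha> \<rho> a b L x = integral {a..b} (\<lambda>t. L t (x t) (caputo \<alpha> \<rho> a b x t))"

definition local_minimizer_on ::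
    "real \<Rightarrow> real \<Rightarrow> real \<Rightarrow> real \<Rightarrow> ((real \<Rightarrow> real) \<Rightarrow> real) \<Rightarrow> (real \<Rightarrow> real) set
      \<Rightarrow> (real \<Rightarrow> real) \<Rightarrow> bool" where
  "local_minimizer_on \<alpha> \<rho> a b J D x \<longleftrightarrow> x \<in> D \<and>
     (\<exists>\<delta>>0. \<forall>y\<in>D. C1norm \<alpha> \<rho> a b (\<lambda>t. y t - x t) < \<delta> \<longrightarrow> J x \<le> J y)"

end

theory Submission
  imports Defs
begin

text \<open>Along every admissible variation x + e * \<eta>, with \<eta> in C^1 and \<eta> a = \<eta> b = 0, the
  functional has a local minimum at e = 0; differentiating under the integral sign gives
  int (L2 * \<eta> + L3 * caputo \<eta>) = 0.  The Caputo-Katugampola derivative is a weakly singular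
  integral of \<eta>', so Fubini turns int g * caputo \<eta> into int \<eta>' * right_int g, and an ordinary
  integration by parts moves the derivative onto right_int g, which yields
  int \<eta> * (L2 - rightD L3) = 0.  Testing with \<eta> = (t - a)(b - t) P for polynomials P,
  Weierstrass approximation forces the continuous Euler-Lagrange expression to vanish.\<close>

definition kern :: "real \<Rightarrow> real \<Rightarrow> real \<Rightarrow> real \<Rightarrow> real" where
  "kern \<alpha> \<rho> t \<tau> = (t powr \<rho> - \<tau> powr \<rho>) powr (- \<alpha>)"

lemma kern_nonneg: "0 \<le> kern \<alpha> \<rho> t \<tau>"
  by (simp add: kern_def)

lemma powr_diff_ge_linear:
  fixes a b t \<tau> \<rho> :: real
  assumes "0 < a" "a \<le> \<tau>" "\<tau> < t" "t \<le> b" "0 < \<rho>"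
  shows "\<rho> * min (a powr (\<rho> - 1)) (b powr (\<rho> - 1)) * (t - \<tau>) \<le> t powr \<rho> - \<tau> powr \<rho>"
proof -
  have "\<And>z. \<tau> \<le> z \<Longrightarrow> z \<le> t \<Longrightarrow> ((\<lambda>z. z powr \<rho>) has_real_derivative \<rho> * z powr (\<rho> - 1)) (at z)"
    using assms by (auto intro!: has_real_derivative_powr)
  from MVT2[OF assms(3) this] obtain z where z: "\<tau> < z" "z < t"
    "t powr \<rho> - \<tau> powr \<rho> = (t - \<tau>) * (\<rho> * z powr (\<rho> - 1))" by blast
  have "min (a powr (\<rho> - 1)) (b powr (\<rho> - 1)) \<le> z powr (\<rho> - 1)"
  proof (cases "\<rho> \<ge> 1")
    case True
    then have "a powr (\<rho> - 1) \<le> z powr (\<rho> - 1)" using z assms by (intro powr_mono2) auto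
    then show ?thesis by simp
  next
    case False
    then have "b powr (\<rho> - 1) \<le> z powr (\<rho> - 1)" using z assms by (intro powr_mono2') auto
    then show ?thesis by simp
  qed
  then show ?thesis using z assms by (simp add: mult_right_mono mult.commute)
qed

lemma kern_le_powr:
  assumes "0 < a" "0 < \<rho>" "0 \<le> \<alpha>"
  obtains M where "0 \<le> M"
    "\<And>t \<tau>. a \<le> \<tau> \<Longrightarrow> \<tau> \<le> t \<Longrightarrow> t \<le> b \<Longrightarrow> kern \<alpha> \<rho> t \<tau> \<le> M * (t - \<tau>) powr (- \<alpha>)"
proof
  define m where "m = \<rho> * min (a powr (\<rho> - 1)) (b powr (\<rho> - 1))"
  show "0 \<le> m powr (- \<alpha>)" by simp
  fix t \<tau> assume "a \<le> \<tau>" "\<tau> \<le> t" "t \<le> b"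
  show "kern \<alpha> \<rho> t \<tau> \<le> m powr (- \<alpha>) * (t - \<tau>) powr (- \<alpha>)"
  proof (cases "\<tau> = t")
    case False
    with \<open>\<tau> \<le> t\<close> have "\<tau> < t" by simp
    have "0 < m * (t - \<tau>)" using assms \<open>a \<le> \<tau>\<close> \<open>\<tau> < t\<close> \<open>t \<le> b\<close> by (simp add: m_def)
    moreover have "m * (t - \<tau>) \<le> t powr \<rho> - \<tau> powr \<rho>"
      unfolding m_def using powr_diff_ge_linear \<open>a \<le> \<tau>\<close> \<open>\<tau> < t\<close> \<open>t \<le> b\<close> assms by blast
    ultimately have "kern \<alpha> \<rho> t \<tau> \<le> (m * (t - \<tau>)) powr (- \<alpha>)"
      unfolding kern_def using assms by (intro powr_mono2') auto
    also have "\<dots> = m powr (- \<alpha>) * (t - \<tau>) powr (- \<alpha>)"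
      using \<open>0 < m * (t - \<tau>)\<close> \<open>\<tau> < t\<close> by (simp add: powr_mult zero_less_mult_iff)
    finally show ?thesis .
  qed (simp add: kern_def)
qed

lemma set_integrable_powr_left:
  fixes u v \<alpha> :: real
  assumes "\<alpha> < 1"
  shows "set_integrable lborel {u..v} (\<lambda>s. (v - s) powr (- \<alpha>))"
proof (cases "u \<le> v")
  case True
  then have "(\<lambda>s. s powr (- \<alpha>)) integrable_on cbox 0 (v - u)"
    using integrable_on_powr_from_0[of "- \<alpha>" "v - u"] assms by simp
  from integrable_affinity[OF this, of "-1" v]
  have "(\<lambda>s. (v - s) powr (- \<alpha>)) absolutely_integrable_on {u..v}"
    by (subst absolutely_integrable_on_iff_nonneg) auto
  then show ?thesis
    by (simp add: absolutely_integrable_on_def set_integrable_def integrable_completion)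
qed (simp add: set_integrable_def)

lemma set_integrable_powr_right:
  fixes u v \<alpha> :: real
  assumes "\<alpha> < 1"
  shows "set_integrable lborel {u..v} (\<lambda>s. (s - u) powr (- \<alpha>))"
proof (cases "u \<le> v")
  case True
  then have "(\<lambda>s. s powr (- \<alpha>)) integrable_on cbox 0 (v - u)"
    using integrable_on_powr_from_0[of "- \<alpha>" "v - u"] assms by simp
  from integrable_affinity[OF this, of 1 "- u"]
  have "(\<lambda>s. (s - u) powr (- \<alpha>)) absolutely_integrable_on {u..v}"
    by (subst absolutely_integrable_on_iff_nonneg) auto
  then show ?thesis
    by (simp add: absolutely_integrable_on_def set_integrable_def integrable_completion)
qed (simp add: set_integrable_def)

lemma set_integrable_kern_left:
  fixes f :: "real \<Rightarrow> real"
  assumes f: "continuous_on UNIV f" and "0 < a" "0 < \<rho>" "0 \<le> \<alpha>" "\<alpha> < 1"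
  shows "set_integrable lborel {a..t} (\<lambda>\<tau>. kern \<alpha> \<rho> t \<tau> * f \<tau>)"
proof -
  obtain M where M: "0 \<le> M"
    "\<And>t' \<tau>. a \<le> \<tau> \<Longrightarrow> \<tau> \<le> t' \<Longrightarrow> t' \<le> t \<Longrightarrow> kern \<alpha> \<rho> t' \<tau> \<le> M * (t' - \<tau>) powr (- \<alpha>)"
    using kern_le_powr assms by metis
  obtain B where B: "0 \<le> B" "\<And>\<tau>. \<tau> \<in> {a..t} \<Longrightarrow> norm (f \<tau>) \<le> B"
    using continuous_on_compact_bound[OF compact_Icc continuous_on_subset[OF f]] by blast
  show ?thesis
  proof (rule set_integrable_bound)
    show "set_integrable lborel {a..t} (\<lambda>\<tau>. M * B * (t - \<tau>) powr (- \<alpha>))"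
      using set_integrable_powr_left assms by simp
    show "set_borel_measurable lborel {a..t} (\<lambda>\<tau>. kern \<alpha> \<rho> t \<tau> * f \<tau>)"
      using borel_measurable_continuous_onI[OF f] unfolding set_borel_measurable_def kern_def
      by measurable
    show "AE \<tau> in lborel. \<tau> \<in> {a..t} \<longrightarrow>
        norm (kern \<alpha> \<rho> t \<tau> * f \<tau>) \<le> norm (M * B * (t - \<tau>) powr (- \<alpha>))"
    proof (rule AE_I2, rule impI)
      fix \<tau> assume "\<tau> \<in> {a..t}"
      then have "kern \<alpha> \<rho> t \<tau> * \<bar>f \<tau>\<bar> \<le> M * (t - \<tau>) powr (- \<alpha>) * B"
        using M B by (intro mult_mono) (auto simp: kern_nonneg)
      then show "norm (kern \<alpha> \<rho> t \<tau> * f \<tau>) \<le> norm (M * B * (t - \<tau>) powr (- \<alpha>))"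
        using M B by (simp add: abs_mult kern_nonneg mult_ac)
    qed
  qed
qed

lemma set_integrable_kern_right:
  fixes g :: "real \<Rightarrow> real"
  assumes g: "continuous_on UNIV g" and "0 < \<tau>" "0 < \<rho>" "0 \<le> \<alpha>" "\<alpha> < 1"
  shows "set_integrable lborel {\<tau>..b} (\<lambda>t. kern \<alpha> \<rho> t \<tau> * g t)"
proof -
  obtain M where M: "0 \<le> M"
    "\<And>t \<tau>'. \<tau> \<le> \<tau>' \<Longrightarrow> \<tau>' \<le> t \<Longrightarrow> t \<le> b \<Longrightarrow> kern \<alpha> \<rho> t \<tau>' \<le> M * (t - \<tau>') powr (- \<alpha>)"
    using kern_le_powr assms by metis
  obtain B where B: "0 \<le> B" "\<And>t. t \<in> {\<tau>..b} \<Longrightarrow> norm (g t) \<le> B"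
    using continuous_on_compact_bound[OF compact_Icc continuous_on_subset[OF g]] by blast
  show ?thesis
  proof (rule set_integrable_bound)
    show "set_integrable lborel {\<tau>..b} (\<lambda>t. M * B * (t - \<tau>) powr (- \<alpha>))"
      using set_integrable_powr_right assms by simp
    show "set_borel_measurable lborel {\<tau>..b} (\<lambda>t. kern \<alpha> \<rho> t \<tau> * g t)"
      using borel_measurable_continuous_onI[OF g] unfolding set_borel_measurable_def kern_def
      by measurable
    show "AE t in lborel. t \<in> {\<tau>..b} \<longrightarrow>
        norm (kern \<alpha> \<rho> t \<tau> * g t) \<le> norm (M * B * (t - \<tau>) powr (- \<alpha>))"
    proof (rule AE_I2, rule impI)
      fix t assume "t \<in> {\<tau>..b}"
      then have "kern \<alpha> \<rho> t \<tau> * \<bar>g t\<bar> \<le> M * (t - \<tau>) powr (- \<alpha>) * B"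
        using M B by (intro mult_mono) (auto simp: kern_nonneg)
      then show "norm (kern \<alpha> \<rho> t \<tau> * g t) \<le> norm (M * B * (t - \<tau>) powr (- \<alpha>))"
        using M B by (simp add: abs_mult kern_nonneg mult_ac)
    qed
  qed
qed

lemma isCont_kern_shift:
  assumes "0 < s" "s < t" "0 < \<rho>"
  shows "isCont (\<lambda>t. kern \<alpha> \<rho> t (t - s)) t"
proof -
  have "(t - s) powr \<rho> < t powr \<rho>" using assms by (intro powr_less_mono2) auto
  then show ?thesis using assms unfolding kern_def by (intro continuous_intros) auto
qed

text \<open>After the substitution s = t - \<tau> the singularity sits at s = 0 for every t, so
  s powr (- \<alpha>) dominates the integrands uniformly in t.\<close>

lemma integral_kern_left_shift:
  fixes f :: "real \<Rightarrow> real"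
  assumes f: "continuous_on UNIV f" and "0 < a" "0 < \<rho>" "0 \<le> \<alpha>" "\<alpha> < 1"
  shows "integral {a..t} (\<lambda>\<tau>. kern \<alpha> \<rho> t \<tau> * f \<tau>)
       = (\<integral>s. indicator {0..t - a} s * (kern \<alpha> \<rho> t (t - s) * f (t - s)) \<partial>lborel)"
proof -
  have "integral {a..t} (\<lambda>\<tau>. kern \<alpha> \<rho> t \<tau> * f \<tau>)
      = (\<integral>\<tau>. indicator {a..t} \<tau> * (kern \<alpha> \<rho> t \<tau> * f \<tau>) \<partial>lborel)"
    using set_borel_integral_eq_integral(2)[OF set_integrable_kern_left[OF assms]]
    by (simp add: set_lebesgue_integral_def)
  also have "\<dots> = (\<integral>s. indicator {a..t} (t + (-1) * s) * (kern \<alpha> \<rho> t (t + (-1) * s) * f (t + (-1) * s)) \<partial>lborel)"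
    using lborel_integral_real_affine[of "-1" _ t] by simp
  also have "\<dots> = (\<integral>s. indicator {0..t - a} s * (kern \<alpha> \<rho> t (t - s) * f (t - s)) \<partial>lborel)"
    by (intro Bochner_Integration.integral_cong) (auto simp: indicator_def)
  finally show ?thesis .
qed

lemma tendsto_kern_shift_integrand:
  fixes f :: "real \<Rightarrow> real"
  assumes f: "continuous_on UNIV f" and lim: "u \<longlonglongrightarrow> t"
    and "0 < a" "0 < \<rho>" "s \<noteq> 0" "s \<noteq> t - a"
  shows "(\<lambda>n. indicator {0..u n - a} s * (kern \<alpha> \<rho> (u n) (u n - s) * f (u n - s)))
       \<longlonglongrightarrow> indicator {0..t - a} s * (kern \<alpha> \<rho> t (t - s) * f (t - s))"
proof -
  consider "s < 0" | "t - a < s" | "0 < s" "s < t - a" using assms by linarith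
  then show ?thesis
  proof cases
    case 2
    then have "eventually (\<lambda>n. u n < s + a) sequentially"
      using order_tendstoD(2)[OF lim] by simp
    then have "eventually (\<lambda>n. indicator {0..u n - a} s * (kern \<alpha> \<rho> (u n) (u n - s) * f (u n - s)) = 0)
        sequentially"
      by eventually_elim simp
    then show ?thesis using 2 by (simp add: tendsto_eventually)
  next
    case 3
    then have "eventually (\<lambda>n. s + a < u n) sequentially"
      using order_tendstoD(1)[OF lim] by simp
    then have "eventually (\<lambda>n. indicator {0..u n - a} s = (1::real)) sequentially"
      by eventually_elim (use 3 in simp)
    then have "(\<lambda>n. indicator {0..u n - a} s :: real) \<longlonglongrightarrow> 1" by (rule tendsto_eventually)
    moreover have "(\<lambda>n. kern \<alpha> \<rho> (u n) (u n - s) * f (u n - s)) \<longlonglongrightarrow> kern \<alpha> \<rho> t (t - s) * f (t - s)"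
      using 3 assms isCont_kern_shift[of s t \<rho> \<alpha>]
      by (intro tendsto_intros isCont_tendsto_compose[OF _ lim] continuous_on_tendsto_compose[OF f]) auto
    ultimately show ?thesis using 3 tendsto_mult by fastforce
  qed simp
qed

lemma continuous_on_kern_integral_left:
  fixes f :: "real \<Rightarrow> real"
  assumes f: "continuous_on UNIV f" and "0 < a" "0 < \<rho>" "0 \<le> \<alpha>" "\<alpha> < 1"
  shows "continuous_on {a..b} (\<lambda>t. integral {a..t} (\<lambda>\<tau>. kern \<alpha> \<rho> t \<tau> * f \<tau>))"
proof (rule continuous_on_sequentiallyI)
  fix u :: "nat \<Rightarrow> real" and t
  assume u: "\<forall>n. u n \<in> {a..b}" and lim: "u \<longlonglongrightarrow> t"
  obtain M where M: "0 \<le> M"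
    "\<And>t \<tau>. a \<le> \<tau> \<Longrightarrow> \<tau> \<le> t \<Longrightarrow> t \<le> b \<Longrightarrow> kern \<alpha> \<rho> t \<tau> \<le> M * (t - \<tau>) powr (- \<alpha>)"
    using kern_le_powr assms by metis
  obtain B where B: "0 \<le> B" "\<And>\<tau>. \<tau> \<in> {a..b} \<Longrightarrow> norm (f \<tau>) \<le> B"
    using continuous_on_compact_bound[OF compact_Icc continuous_on_subset[OF f]] by blast
  define G where "G t s = indicator {0..t - a} s * (kern \<alpha> \<rho> t (t - s) * f (t - s))" for t s
  have [measurable]: "f \<in> borel_measurable borel" using borel_measurable_continuous_onI[OF f] .
  have G_meas: "G t' \<in> borel_measurable lborel" for t' unfolding G_def kern_def by measurable
  have "(\<lambda>n. \<integral>s. G (u n) s \<partial>lborel) \<longlonglongrightarrow> (\<integral>s. G t s \<partial>lborel)"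
  proof (rule integral_dominated_convergence[OF G_meas G_meas])
    have "set_integrable lborel {0..b - a} (\<lambda>s. M * B * (s - 0) powr (- \<alpha>))"
      using set_integrable_powr_right[of \<alpha> 0 "b - a"] assms by simp
    then show "integrable lborel (\<lambda>s. indicator {0..b - a} s *\<^sub>R (M * B * (s - 0) powr (- \<alpha>)))"
      by (simp add: set_integrable_def)
    show "AE s in lborel. norm (G (u n) s) \<le> indicator {0..b - a} s *\<^sub>R (M * B * (s - 0) powr (- \<alpha>))"
      for n
    proof (rule AE_I2)
      fix s
      show "norm (G (u n) s) \<le> indicator {0..b - a} s *\<^sub>R (M * B * (s - 0) powr (- \<alpha>))"
      proof (cases "s \<in> {0..u n - a}")
        case True
        moreover have "u n \<le> b" using u by simp
        ultimately have "a \<le> u n - s" "u n - s \<le> u n" "s \<in> {0..b - a}" by auto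
        then have "kern \<alpha> \<rho> (u n) (u n - s) * \<bar>f (u n - s)\<bar> \<le> M * s powr (- \<alpha>) * B"
          using M(2)[of "u n - s" "u n"] M(1) B \<open>u n \<le> b\<close> by (intro mult_mono) (auto simp: kern_nonneg)
        then show ?thesis using True \<open>s \<in> {0..b - a}\<close>
          by (simp add: G_def abs_mult kern_nonneg mult_ac)
      qed (use M B in \<open>auto simp: G_def indicator_def\<close>)
    qed
    show "AE s in lborel. (\<lambda>n. G (u n) s) \<longlonglongrightarrow> G t s"
      using AE_lborel_singleton[of 0] AE_lborel_singleton[of "t - a"]
      by eventually_elim (use tendsto_kern_shift_integrand[OF f lim] assms in \<open>simp add: G_def\<close>)
  qed
  then show "(\<lambda>n. integral {a..u n} (\<lambda>\<tau>. kern \<alpha> \<rho> (u n) \<tau> * f \<tau>))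
      \<longlonglongrightarrow> integral {a..t} (\<lambda>\<tau>. kern \<alpha> \<rho> t \<tau> * f \<tau>)"
    unfolding G_def using integral_kern_left_shift[OF assms] by simp
qed

lemma set_integral_powr_left_le:
  fixes a b t \<alpha> :: real
  assumes "a \<le> t" "t \<le> b" "\<alpha> < 1"
  shows "(LINT \<tau>:{a..t}|lborel. (t - \<tau>) powr (- \<alpha>)) \<le> (LINT s:{0..b - a}|lborel. s powr (- \<alpha>))"
proof -
  have "(LINT \<tau>:{a..t}|lborel. (t - \<tau>) powr (- \<alpha>))
      = (\<integral>s. indicator {a..t} (t + (-1) * s) * (t - (t + (-1) * s)) powr (- \<alpha>) \<partial>lborel)"
    using lborel_integral_real_affine[of "-1" "\<lambda>\<tau>. indicator {a..t} \<tau> * (t - \<tau>) powr (- \<alpha>)" t]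
    by (simp add: set_lebesgue_integral_def)
  also have "\<dots> = (LINT s:{0..t - a}|lborel. (s - 0) powr (- \<alpha>))"
    unfolding set_lebesgue_integral_def
    by (intro Bochner_Integration.integral_cong) (auto simp: indicator_def)
  also have "\<dots> \<le> (LINT s:{0..b - a}|lborel. (s - 0) powr (- \<alpha>))"
    using set_integrable_powr_right[of \<alpha> 0] assms unfolding set_lebesgue_integral_def
    by (intro integral_mono) (auto simp: set_integrable_def indicator_def)
  finally show ?thesis by simp
qed

lemma set_integral_norm_kern_left_bounded:
  fixes h :: "real \<Rightarrow> real"
  assumes h: "continuous_on UNIV h" and "0 < a" "0 < \<rho>" "0 \<le> \<alpha>" "\<alpha> < 1"
  obtains K where "\<And>t. t \<in> {a..b} \<Longrightarrow> (LINT \<tau>:{a..t}|lborel. norm (kern \<alpha> \<rho> t \<tau> * h \<tau>)) \<le> K"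
proof -
  obtain M where M: "0 \<le> M"
    "\<And>t \<tau>. a \<le> \<tau> \<Longrightarrow> \<tau> \<le> t \<Longrightarrow> t \<le> b \<Longrightarrow> kern \<alpha> \<rho> t \<tau> \<le> M * (t - \<tau>) powr (- \<alpha>)"
    using kern_le_powr assms by metis
  obtain B where B: "0 \<le> B" "\<And>t. t \<in> {a..b} \<Longrightarrow> norm (h t) \<le> B"
    using continuous_on_compact_bound[OF compact_Icc continuous_on_subset[OF h]] by blast
  have "(LINT \<tau>:{a..t}|lborel. norm (kern \<alpha> \<rho> t \<tau> * h \<tau>))
      \<le> M * B * (LINT s:{0..b - a}|lborel. s powr (- \<alpha>))" if t: "t \<in> {a..b}" for t
  proof -
    have "(LINT \<tau>:{a..t}|lborel. norm (kern \<alpha> \<rho> t \<tau> * h \<tau>))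
        \<le> (LINT \<tau>:{a..t}|lborel. M * B * (t - \<tau>) powr (- \<alpha>))"
    proof (rule set_integral_mono)
      show "set_integrable lborel {a..t} (\<lambda>\<tau>. norm (kern \<alpha> \<rho> t \<tau> * h \<tau>))"
        using set_integrable_abs[OF set_integrable_kern_left[OF h assms(2-)]] by simp
      show "set_integrable lborel {a..t} (\<lambda>\<tau>. M * B * (t - \<tau>) powr (- \<alpha>))"
        using set_integrable_powr_left assms by simp
      fix \<tau> assume "\<tau> \<in> {a..t}"
      then have "kern \<alpha> \<rho> t \<tau> * \<bar>h \<tau>\<bar> \<le> M * (t - \<tau>) powr (- \<alpha>) * B"
        using t M B by (intro mult_mono) (auto simp: kern_nonneg)
      then show "norm (kern \<alpha> \<rho> t \<tau> * h \<tau>) \<le> M * B * (t - \<tau>) powr (- \<alpha>)"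
        by (simp add: abs_mult kern_nonneg mult_ac)
    qed
    also have "\<dots> \<le> M * B * (LINT s:{0..b - a}|lborel. s powr (- \<alpha>))"
      using set_integral_powr_left_le t assms M B by (simp add: mult_left_mono)
    finally show ?thesis .
  qed
  then show ?thesis by (rule that)
qed

lemma integrable_kern_pair:
  fixes g h :: "real \<Rightarrow> real"
  assumes g: "continuous_on UNIV g" and h: "continuous_on UNIV h"
    and "0 < a" "0 < \<rho>" "0 \<le> \<alpha>" "\<alpha> < 1"
  shows "integrable (lborel \<Otimes>\<^sub>M lborel) (\<lambda>(t, \<tau>).
           indicator {a..b} t * g t * (indicator {a..t} \<tau> * (kern \<alpha> \<rho> t \<tau> * h \<tau>)))"
    (is "integrable _ (\<lambda>(t, \<tau>). ?F t \<tau>)")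
proof (rule lborel_pair.Fubini_integrable)
  have [measurable]: "g \<in> borel_measurable borel" "h \<in> borel_measurable borel"
    using borel_measurable_continuous_onI g h by blast+
  show "(\<lambda>(t, \<tau>). ?F t \<tau>) \<in> borel_measurable (lborel \<Otimes>\<^sub>M lborel)"
    unfolding kern_def indicator_def atLeastAtMost_iff by measurable
  show "AE t in lborel. integrable lborel (\<lambda>\<tau>. case (t, \<tau>) of (t, \<tau>) \<Rightarrow> ?F t \<tau>)"
    using set_integrable_kern_left[OF h assms(3-)] by (simp add: set_integrable_def)
  obtain K where K: "\<And>t. t \<in> {a..b} \<Longrightarrow> (LINT \<tau>:{a..t}|lborel. norm (kern \<alpha> \<rho> t \<tau> * h \<tau>)) \<le> K"
    using set_integral_norm_kern_left_bounded[OF h assms(3-)] by blast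
  obtain B where B: "0 \<le> B" "\<And>t. t \<in> {a..b} \<Longrightarrow> norm (g t) \<le> B"
    using continuous_on_compact_bound[OF compact_Icc continuous_on_subset[OF g]] by blast
  have "integrable lborel (\<lambda>t. indicator {a..b} t *\<^sub>R (B * K))"
    by (rule borel_integrable_compact) auto
  then show "integrable lborel (\<lambda>t. \<integral>\<tau>. norm (case (t, \<tau>) of (t, \<tau>) \<Rightarrow> ?F t \<tau>) \<partial>lborel)"
  proof (rule Bochner_Integration.integrable_bound)
    show "(\<lambda>t. \<integral>\<tau>. norm (case (t, \<tau>) of (t, \<tau>) \<Rightarrow> ?F t \<tau>) \<partial>lborel) \<in> borel_measurable lborel"
      unfolding kern_def indicator_def atLeastAtMost_iff
      by (rule lborel.borel_measurable_lebesgue_integral) measurable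
    have "(\<integral>\<tau>. norm (?F t \<tau>) \<partial>lborel) \<le> indicator {a..b} t * (B * K)" for t
    proof (cases "t \<in> {a..b}")
      case True
      have "(\<integral>\<tau>. norm (?F t \<tau>) \<partial>lborel) = \<bar>g t\<bar> * (LINT \<tau>:{a..t}|lborel. norm (kern \<alpha> \<rho> t \<tau> * h \<tau>))"
        using True by (simp add: set_lebesgue_integral_def abs_mult mult.assoc)
      also have "\<dots> \<le> B * K"
        using True B K[OF True] by (intro mult_mono) (auto simp: set_lebesgue_integral_def)
      finally show ?thesis using True by simp
    qed simp
    then show "AE t in lborel. norm (\<integral>\<tau>. norm (case (t, \<tau>) of (t, \<tau>) \<Rightarrow> ?F t \<tau>) \<partial>lborel)
        \<le> norm (indicator {a..b} t *\<^sub>R (B * K))"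
      by (intro AE_I2) (auto intro: order_trans[OF _ abs_ge_self])
  qed
qed

lemma integral_kern_swap:
  fixes g h :: "real \<Rightarrow> real"
  assumes g: "continuous_on UNIV g" and h: "continuous_on UNIV h"
    and "0 < a" "0 < \<rho>" "0 \<le> \<alpha>" "\<alpha> < 1"
  shows "integral {a..b} (\<lambda>t. g t * integral {a..t} (\<lambda>\<tau>. kern \<alpha> \<rho> t \<tau> * h \<tau>))
       = integral {a..b} (\<lambda>\<tau>. h \<tau> * integral {\<tau>..b} (\<lambda>t. kern \<alpha> \<rho> t \<tau> * g t))"
proof -
  define F where "F t \<tau> = indicator {a..b} t * g t * (indicator {a..t} \<tau> * (kern \<alpha> \<rho> t \<tau> * h \<tau>))"
    for t \<tau>
  have F_swap: "F t \<tau> = indicator {a..b} \<tau> * h \<tau> * (indicator {\<tau>..b} t * (kern \<alpha> \<rho> t \<tau> * g t))"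
    for t \<tau> unfolding F_def by (auto simp: indicator_def)
  have F_int: "integrable (lborel \<Otimes>\<^sub>M lborel) (\<lambda>(t, \<tau>). F t \<tau>)"
    unfolding F_def using integrable_kern_pair[OF assms] .
  have inner_left: "(\<integral>\<tau>. F t \<tau> \<partial>lborel)
      = indicator {a..b} t * (g t * integral {a..t} (\<lambda>\<tau>. kern \<alpha> \<rho> t \<tau> * h \<tau>))" for t
    using set_borel_integral_eq_integral(2)[OF set_integrable_kern_left[OF h assms(3-)], of t]
    by (simp add: F_def set_lebesgue_integral_def)
  have inner_right: "(\<integral>t. F t \<tau> \<partial>lborel)
      = indicator {a..b} \<tau> * (h \<tau> * integral {\<tau>..b} (\<lambda>t. kern \<alpha> \<rho> t \<tau> * g t))" for \<tau>
  proof (cases "\<tau> \<in> {a..b}")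
    case True
    with assms have "0 < \<tau>" by simp
    from set_borel_integral_eq_integral(2)[OF set_integrable_kern_right[OF g this assms(4-)], of b]
    show ?thesis by (simp add: F_swap set_lebesgue_integral_def)
  qed (simp add: F_swap)
  have "integral {a..b} (\<lambda>t. g t * integral {a..t} (\<lambda>\<tau>. kern \<alpha> \<rho> t \<tau> * h \<tau>))
      = (\<integral>t. (\<integral>\<tau>. F t \<tau> \<partial>lborel) \<partial>lborel)"
  proof -
    have "continuous_on {a..b} (\<lambda>t. g t * integral {a..t} (\<lambda>\<tau>. kern \<alpha> \<rho> t \<tau> * h \<tau>))"
      using continuous_on_kern_integral_left[OF h assms(3-)]
      by (intro continuous_intros continuous_on_subset[OF g]) auto
    then have "set_integrable lborel {a..b} (\<lambda>t. g t * integral {a..t} (\<lambda>\<tau>. kern \<alpha> \<rho> t \<tau> * h \<tau>))"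
      unfolding set_integrable_def by (intro borel_integrable_compact) auto
    from set_borel_integral_eq_integral(2)[OF this] show ?thesis
      by (simp add: inner_left set_lebesgue_integral_def)
  qed
  also have "\<dots> = (\<integral>\<tau>. (\<integral>t. F t \<tau> \<partial>lborel) \<partial>lborel)"
    using lborel_pair.Fubini_integral[of F] F_int by simp
  also have "\<dots> = integral {a..b} (\<lambda>\<tau>. h \<tau> * integral {\<tau>..b} (\<lambda>t. kern \<alpha> \<rho> t \<tau> * g t))"
  proof -
    have "integrable lborel (\<lambda>\<tau>. \<integral>t. F t \<tau> \<partial>lborel)"
      using lborel_pair.integrable_snd[of F] F_int by simp
    then have "set_integrable lborel {a..b} (\<lambda>\<tau>. h \<tau> * integral {\<tau>..b} (\<lambda>t. kern \<alpha> \<rho> t \<tau> * g t))"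
      by (simp add: set_integrable_def inner_right)
    from set_borel_integral_eq_integral(2)[OF this] show ?thesis
      by (simp add: inner_right set_lebesgue_integral_def)
  qed
  finally show ?thesis .
qed

lemma C1_on_derivative_extension:
  assumes "C1_on a b x"
  obtains x' where "continuous_on UNIV x'"
    "\<And>t. t \<in> {a..b} \<Longrightarrow> (x has_real_derivative x' t) (at t within {a..b})"
proof -
  obtain d where d: "continuous_on {a..b} d"
    "\<And>t. t \<in> {a..b} \<Longrightarrow> (x has_real_derivative d t) (at t within {a..b})"
    using assms unfolding C1_on_def by blast
  show ?thesis
  proof
    show "continuous_on UNIV (ext_cont d a b)" using d(1) by (intro continuous_on_ext_cont) simp
    show "(x has_real_derivative ext_cont d a b t) (at t within {a..b})" if "t \<in> {a..b}" for t
      using d(2)[OF that] that by simp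
  qed
qed

lemma C1_on_imp_continuous_on: "C1_on a b x \<Longrightarrow> continuous_on {a..b} x"
  unfolding C1_on_def continuous_on_eq_continuous_within
  using DERIV_continuous by blast

lemma C1_on_add_scaled:
  assumes "C1_on a b y" "C1_on a b z"
  shows "C1_on a b (\<lambda>t. y t + e * z t)"
proof -
  obtain y' z' where "continuous_on {a..b} y'" "continuous_on {a..b} z'"
    "\<forall>t\<in>{a..b}. (y has_real_derivative y' t) (at t within {a..b})"
    "\<forall>t\<in>{a..b}. (z has_real_derivative z' t) (at t within {a..b})"
    using assms unfolding C1_on_def by blast
  then show ?thesis
    unfolding C1_on_def
    by (intro exI[of _ "\<lambda>t. y' t + e * z' t"]) (auto intro!: continuous_intros derivative_eq_intros)
qed

lemma caputo_eq_kern_integral: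
  assumes "a < b"
    and y: "\<And>\<tau>. \<tau> \<in> {a..b} \<Longrightarrow> (y has_real_derivative y' \<tau>) (at \<tau> within {a..b})"
    and "t \<in> {a..b}"
  shows "caputo \<alpha> \<rho> a b y t = \<rho> powr \<alpha> / Gamma (1 - \<alpha>) * integral {a..t} (\<lambda>\<tau>. kern \<alpha> \<rho> t \<tau> * y' \<tau>)"
proof -
  have "vector_derivative y (at \<tau> within {a..b}) = y' \<tau>" if "\<tau> \<in> {a..t}" for \<tau>
    using that \<open>t \<in> {a..b}\<close> y[of \<tau>]
    by (intro vector_derivative_within_closed_interval[OF \<open>a < b\<close>])
       (auto simp: has_real_derivative_iff_has_vector_derivative)
  then have "integral {a..t} (\<lambda>\<tau>. (t powr \<rho> - \<tau> powr \<rho>) powr (- \<alpha>) * vector_derivative y (at \<tau> within {a..b}))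
      = integral {a..t} (\<lambda>\<tau>. kern \<alpha> \<rho> t \<tau> * y' \<tau>)"
    by (intro integral_cong) (simp add: kern_def)
  then show ?thesis unfolding caputo_def by simp
qed

lemma continuous_on_caputo:
  assumes "C1_on a b y" "0 < a" "a < b" "0 < \<rho>" "0 \<le> \<alpha>" "\<alpha> < 1"
  shows "continuous_on {a..b} (caputo \<alpha> \<rho> a b y)"
proof -
  obtain y' where y': "continuous_on UNIV y'"
    "\<And>t. t \<in> {a..b} \<Longrightarrow> (y has_real_derivative y' t) (at t within {a..b})"
    using C1_on_derivative_extension[OF assms(1)] by blast
  have "continuous_on {a..b} (\<lambda>t. \<rho> powr \<alpha> / Gamma (1 - \<alpha>) * integral {a..t} (\<lambda>\<tau>. kern \<alpha> \<rho> t \<tau> * y' \<tau>))"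
    using continuous_on_kern_integral_left[OF y'(1)] assms by (intro continuous_intros) auto
  then show ?thesis
    by (rule continuous_on_eq) (use caputo_eq_kern_integral[OF \<open>a < b\<close> y'(2)] in simp)
qed

lemma caputo_scaled:
  assumes "C1_on a b y" "a < b" "t \<in> {a..b}"
  shows "caputo \<alpha> \<rho> a b (\<lambda>t. e * y t) t = e * caputo \<alpha> \<rho> a b y t"
proof -
  obtain y' where y': "\<And>t. t \<in> {a..b} \<Longrightarrow> (y has_real_derivative y' t) (at t within {a..b})"
    using assms(1) unfolding C1_on_def by blast
  have "((\<lambda>t. e * y t) has_real_derivative e * y' t) (at t within {a..b})" if "t \<in> {a..b}" for t
    using y'[OF that] by (auto intro: derivative_eq_intros)
  from caputo_eq_kern_integral[OF \<open>a < b\<close> this] caputo_eq_kern_integral[OF \<open>a < b\<close> y'] assms(3)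
  show ?thesis by (simp add: mult_ac)
qed

lemma caputo_add_scaled:
  assumes "C1_on a b y" "C1_on a b z" "0 < a" "a < b" "0 < \<rho>" "0 \<le> \<alpha>" "\<alpha> < 1" "t \<in> {a..b}"
  shows "caputo \<alpha> \<rho> a b (\<lambda>t. y t + e * z t) t = caputo \<alpha> \<rho> a b y t + e * caputo \<alpha> \<rho> a b z t"
proof -
  obtain y' where y': "continuous_on UNIV y'"
    "\<And>t. t \<in> {a..b} \<Longrightarrow> (y has_real_derivative y' t) (at t within {a..b})"
    using C1_on_derivative_extension[OF assms(1)] by blast
  obtain z' where z': "continuous_on UNIV z'"
    "\<And>t. t \<in> {a..b} \<Longrightarrow> (z has_real_derivative z' t) (at t within {a..b})"
    using C1_on_derivative_extension[OF assms(2)] by blast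
  have yz: "((\<lambda>t. y t + e * z t) has_real_derivative y' t + e * z' t) (at t within {a..b})"
    if "t \<in> {a..b}" for t
    using y'(2)[OF that] z'(2)[OF that] by (auto intro!: derivative_eq_intros)
  have iy: "(\<lambda>\<tau>. kern \<alpha> \<rho> t \<tau> * y' \<tau>) integrable_on {a..t}"
    and iz: "(\<lambda>\<tau>. kern \<alpha> \<rho> t \<tau> * z' \<tau>) integrable_on {a..t}"
    using set_borel_integral_eq_integral(1)[OF set_integrable_kern_left] y'(1) z'(1) assms by auto
  have "integral {a..t} (\<lambda>\<tau>. kern \<alpha> \<rho> t \<tau> * (y' \<tau> + e * z' \<tau>))
      = integral {a..t} (\<lambda>\<tau>. kern \<alpha> \<rho> t \<tau> * y' \<tau> + e * (kern \<alpha> \<rho> t \<tau> * z' \<tau>))"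
    by (simp add: algebra_simps)
  also have "\<dots> = integral {a..t} (\<lambda>\<tau>. kern \<alpha> \<rho> t \<tau> * y' \<tau>) + e * integral {a..t} (\<lambda>\<tau>. kern \<alpha> \<rho> t \<tau> * z' \<tau>)"
    using integral_add[OF iy integrable_on_cmult_left[OF iz]] by simp
  finally show ?thesis
    using caputo_eq_kern_integral[OF \<open>a < b\<close> yz] caputo_eq_kern_integral[OF \<open>a < b\<close> y'(2)]
      caputo_eq_kern_integral[OF \<open>a < b\<close> z'(2)] assms(8)
    by (simp add: algebra_simps add_divide_distrib)
qed

lemma C1norm_scaled_le:
  assumes "C1_on a b \<eta>" "0 < a" "a < b" "0 < \<rho>" "0 \<le> \<alpha>" "\<alpha> < 1"
  shows "C1norm \<alpha> \<rho> a b (\<lambda>t. e * \<eta> t) \<le> \<bar>e\<bar> * C1norm \<alpha> \<rho> a b \<eta>"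
proof -
  have SUP_scaled: "(SUP t\<in>{a..b}. \<bar>e * f t\<bar>) \<le> \<bar>e\<bar> * (SUP t\<in>{a..b}. \<bar>f t\<bar>)"
    if f: "continuous_on {a..b} f" for f
  proof (rule cSUP_least)
    obtain B where "\<And>t. t \<in> {a..b} \<Longrightarrow> norm (f t) \<le> B"
      using continuous_on_compact_bound[OF compact_Icc f] by blast
    then have "bdd_above ((\<lambda>t. \<bar>f t\<bar>) ` {a..b})" by (intro bdd_aboveI2) auto
    then show "\<bar>e * f t\<bar> \<le> \<bar>e\<bar> * (SUP t\<in>{a..b}. \<bar>f t\<bar>)" if "t \<in> {a..b}" for t
      using cSUP_upper[OF that] unfolding abs_mult by (intro mult_left_mono) auto
  qed (use \<open>a < b\<close> in simp)
  have "(SUP t\<in>{a..b}. \<bar>caputo \<alpha> \<rho> a b (\<lambda>t. e * \<eta> t) t\<bar>) = (SUP t\<in>{a..b}. \<bar>e * caputo \<alpha> \<rho> a b \<eta> t\<bar>)"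
    using caputo_scaled[OF assms(1,3)] by simp
  also have "\<dots> \<le> \<bar>e\<bar> * (SUP t\<in>{a..b}. \<bar>caputo \<alpha> \<rho> a b \<eta> t\<bar>)"
    using SUP_scaled continuous_on_caputo assms by blast
  moreover have "(SUP t\<in>{a..b}. \<bar>e * \<eta> t\<bar>) \<le> \<bar>e\<bar> * (SUP t\<in>{a..b}. \<bar>\<eta> t\<bar>)"
    using SUP_scaled C1_on_imp_continuous_on assms(1) by blast
  ultimately show ?thesis unfolding C1norm_def by (simp add: distrib_left)
qed

lemma integral_mult_caputo_eq_right_int:
  assumes "0 < a" "a < b" "0 < \<rho>" "0 \<le> \<alpha>" "\<alpha> < 1"
    and \<eta>': "continuous_on UNIV \<eta>'"
      "\<And>t. t \<in> {a..b} \<Longrightarrow> (\<eta> has_real_derivative \<eta>' t) (at t within {a..b})"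
    and g: "continuous_on {a..b} g"
  shows "integral {a..b} (\<lambda>t. g t * caputo \<alpha> \<rho> a b \<eta> t)
       = \<rho> powr \<alpha> / Gamma (1 - \<alpha>) * integral {a..b} (\<lambda>\<tau>. \<eta>' \<tau> * right_int \<alpha> \<rho> b g \<tau>)"
proof -
  define g' where "g' = ext_cont g a b"
  have g': "continuous_on UNIV g'" "\<And>t. t \<in> {a..b} \<Longrightarrow> g' t = g t"
    using g by (auto simp: g'_def intro: continuous_on_ext_cont)
  have "integral {a..b} (\<lambda>t. g t * caputo \<alpha> \<rho> a b \<eta> t)
      = integral {a..b} (\<lambda>t. \<rho> powr \<alpha> / Gamma (1 - \<alpha>) *
          (g' t * integral {a..t} (\<lambda>\<tau>. kern \<alpha> \<rho> t \<tau> * \<eta>' \<tau>)))"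
    by (intro integral_cong) (use g' caputo_eq_kern_integral[OF \<open>a < b\<close> \<eta>'(2)] in simp)
  also have "\<dots> = \<rho> powr \<alpha> / Gamma (1 - \<alpha>) *
      integral {a..b} (\<lambda>\<tau>. \<eta>' \<tau> * integral {\<tau>..b} (\<lambda>t. kern \<alpha> \<rho> t \<tau> * g' t))"
    using integral_kern_swap[OF g'(1) \<eta>'(1)] assms by simp
  also have "integral {a..b} (\<lambda>\<tau>. \<eta>' \<tau> * integral {\<tau>..b} (\<lambda>t. kern \<alpha> \<rho> t \<tau> * g' t))
      = integral {a..b} (\<lambda>\<tau>. \<eta>' \<tau> * right_int \<alpha> \<rho> b g \<tau>)"
    unfolding right_int_def kern_def
    by (intro integral_cong arg_cong2[where f="(*)"] refl) (auto simp: g')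
  finally show ?thesis .
qed

lemma integration_by_parts_vanishing_ends:
  fixes \<eta> R :: "real \<Rightarrow> real"
  assumes "a < b"
    and \<eta>: "\<And>t. t \<in> {a..b} \<Longrightarrow> (\<eta> has_real_derivative \<eta>' t) (at t within {a..b})" "\<eta> a = 0" "\<eta> b = 0"
    and R: "\<forall>t\<in>{a..b}. R differentiable (at t within {a..b})"
    and R': "continuous_on {a..b} (\<lambda>t. vector_derivative R (at t within {a..b}))"
  shows "integral {a..b} (\<lambda>t. \<eta>' t * R t)
       = - integral {a..b} (\<lambda>t. \<eta> t * vector_derivative R (at t within {a..b}))"
proof -
  define R' where "R' t = vector_derivative R (at t within {a..b})" for t
  have \<eta>_cont: "continuous_on {a..b} \<eta>"
    unfolding continuous_on_eq_continuous_within using \<eta>(1) DERIV_continuous by blast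
  have R_cont: "continuous_on {a..b} R"
    unfolding continuous_on_eq_continuous_within using R differentiable_imp_continuous_within by blast
  have R_deriv: "(R has_vector_derivative R' t) (at t)" if "t \<in> {a<..<b}" for t
  proof -
    have "(R has_vector_derivative R' t) (at t within {a..b})"
      unfolding R'_def using R that by (intro vector_derivative_works[THEN iffD1]) auto
    then show ?thesis using at_within_Icc_at[of a t b] that by simp
  qed
  have \<eta>_deriv: "(\<eta> has_vector_derivative \<eta>' t) (at t)" if "t \<in> {a<..<b}" for t
    using \<eta>(1)[of t] that at_within_Icc_at[of a t b]
    by (simp add: has_real_derivative_iff_has_vector_derivative)
  have "continuous_on {a..b} (\<lambda>t. \<eta> t * R' t)"
    using \<eta>_cont R' by (simp add: R'_def continuous_on_mult)
  then have "((\<lambda>t. \<eta> t * R' t) has_integral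
      \<eta> b * R b - \<eta> a * R a - (- integral {a..b} (\<lambda>t. \<eta> t * R' t))) {a..b}"
    using \<eta>(2,3) by (simp add: integrable_integral integrable_continuous_interval)
  then have "((\<lambda>t. \<eta>' t * R t) has_integral - integral {a..b} (\<lambda>t. \<eta> t * R' t)) {a..b}"
    using integration_by_parts_interior[OF bounded_bilinear_mult _ \<eta>_cont R_cont \<eta>_deriv R_deriv]
      \<open>a < b\<close> by simp
  then show ?thesis by (simp add: R'_def integral_unique)
qed

lemma caputo_integration_by_parts:
  assumes "0 < a" "a < b" "0 < \<rho>" "0 < \<alpha>" "\<alpha> < 1"
    and \<eta>: "C1_on a b \<eta>" "\<eta> a = 0" "\<eta> b = 0"
    and g: "continuous_on {a..b} g"
    and R_diff: "\<forall>t\<in>{a..b}. right_int \<alpha> \<rho> b g differentiable (at t within {a..b})"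
    and rightD_cont: "continuous_on {a..b} (rightD \<alpha> \<rho> a b g)"
  shows "integral {a..b} (\<lambda>t. g t * caputo \<alpha> \<rho> a b \<eta> t)
       = - integral {a..b} (\<lambda>t. \<eta> t * rightD \<alpha> \<rho> a b g t)"
proof -
  obtain \<eta>' where \<eta>': "continuous_on UNIV \<eta>'"
    "\<And>t. t \<in> {a..b} \<Longrightarrow> (\<eta> has_real_derivative \<eta>' t) (at t within {a..b})"
    using C1_on_derivative_extension[OF \<eta>(1)] by blast
  define c where "c = \<rho> powr \<alpha> / Gamma (1 - \<alpha>)"
  have "0 < c" using assms by (simp add: c_def Gamma_real_pos)
  define R' where "R' t = vector_derivative (right_int \<alpha> \<rho> b g) (at t within {a..b})" for t
  have rightD_eq: "rightD \<alpha> \<rho> a b g t = c * R' t" for t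
    unfolding rightD_def R'_def c_def ..
  have "continuous_on {a..b} (\<lambda>t. rightD \<alpha> \<rho> a b g t / c)"
    using rightD_cont \<open>0 < c\<close> by (intro continuous_intros) auto
  then have "continuous_on {a..b} R'" using \<open>0 < c\<close> by (simp add: rightD_eq)
  then have "integral {a..b} (\<lambda>t. \<eta>' t * right_int \<alpha> \<rho> b g t) = - integral {a..b} (\<lambda>t. \<eta> t * R' t)"
    using integration_by_parts_vanishing_ends[OF \<open>a < b\<close> \<eta>'(2) \<eta>(2,3) R_diff]
    unfolding R'_def by blast
  then have "integral {a..b} (\<lambda>t. g t * caputo \<alpha> \<rho> a b \<eta> t) = - c * integral {a..b} (\<lambda>t. \<eta> t * R' t)"
    using integral_mult_caputo_eq_right_int[OF assms(1-3) _ assms(5) \<eta>' g] assms by (simp add: c_def)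
  also have "\<dots> = - integral {a..b} (\<lambda>t. \<eta> t * rightD \<alpha> \<rho> a b g t)"
    by (simp add: rightD_eq mult.left_commute)
  finally show ?thesis .
qed

lemma polynomial_orthogonal_imp_zero:
  fixes F :: "real \<Rightarrow> real"
  assumes "a < b" and F: "continuous_on {a..b} F"
    and orth: "\<And>P. polynomial_function P \<Longrightarrow> integral {a..b} (\<lambda>t. P t * F t) = 0"
  shows "\<forall>t\<in>{a..b}. F t = 0"
proof -
  obtain B where B: "0 \<le> B" "\<And>t. t \<in> {a..b} \<Longrightarrow> norm (F t) \<le> B"
    using continuous_on_compact_bound[OF compact_Icc F] by blast
  have FF: "continuous_on {a..b} (\<lambda>t. F t * F t)" by (intro continuous_intros F)
  have small: "\<bar>integral {a..b} (\<lambda>t. F t * F t)\<bar> \<le> (b - a) * B * e" if "0 < e" for e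
  proof -
    obtain P where P: "polynomial_function P" "\<And>t. t \<in> {a..b} \<Longrightarrow> norm (F t - P t) < e"
      using Stone_Weierstrass_polynomial_function[OF compact_Icc F \<open>0 < e\<close>] by blast
    have PF: "continuous_on {a..b} (\<lambda>t. P t * F t)"
      by (intro continuous_intros F continuous_on_polymonial_function[OF P(1)])
    have "integral {a..b} (\<lambda>t. F t * F t)
        = integral {a..b} (\<lambda>t. F t * F t) - integral {a..b} (\<lambda>t. P t * F t)"
      using orth[OF P(1)] by simp
    also have "\<dots> = integral {a..b} (\<lambda>t. (F t - P t) * F t)"
      using integral_diff[OF integrable_continuous_interval[OF FF] integrable_continuous_interval[OF PF]]
      by (simp add: algebra_simps)
    finally have "\<bar>integral {a..b} (\<lambda>t. F t * F t)\<bar> = norm (integral {a..b} (\<lambda>t. (F t - P t) * F t))"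
      by simp
    also have "\<dots> \<le> integral {a..b} (\<lambda>t. e * B)"
    proof (rule integral_norm_bound_integral)
      show "(\<lambda>t. (F t - P t) * F t) integrable_on {a..b}"
        by (intro integrable_continuous_interval continuous_intros F
            continuous_on_polymonial_function[OF P(1)])
      show "norm ((F t - P t) * F t) \<le> e * B" if "t \<in> {a..b}" for t
        using P(2)[OF that] B(2)[OF that] \<open>0 < e\<close> by (simp add: abs_mult mult_mono)
    qed auto
    finally show ?thesis using \<open>a < b\<close> by (simp add: mult_ac)
  qed
  have "integral {a..b} (\<lambda>t. F t * F t) = 0"
  proof (rule ccontr)
    define I where "I = \<bar>integral {a..b} (\<lambda>t. F t * F t)\<bar>"
    define K where "K = (b - a) * B"
    assume "integral {a..b} (\<lambda>t. F t * F t) \<noteq> 0"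
    then have "0 < I" by (simp add: I_def)
    have "0 \<le> K" using B \<open>a < b\<close> by (simp add: K_def)
    have "K * (I / (K + 1)) = I * (K / (K + 1))" by simp
    also have "\<dots> < I * 1" using \<open>0 < I\<close> \<open>0 \<le> K\<close> by (intro mult_strict_left_mono) auto
    finally have "K * (I / (K + 1)) < I" by simp
    moreover have "0 < I / (K + 1)" using \<open>0 < I\<close> \<open>0 \<le> K\<close> by simp
    ultimately show False using small unfolding I_def K_def by fastforce
  qed
  then show ?thesis using integral_eq_0_iff[OF FF \<open>a < b\<close>] by simp
qed

lemma fundamental_lemma_polynomial:
  fixes E :: "real \<Rightarrow> real"
  assumes "a < b" and E: "continuous_on {a..b} E"
    and orth: "\<And>\<eta>. polynomial_function \<eta> \<Longrightarrow> \<eta> a = 0 \<Longrightarrow> \<eta> b = 0 \<Longrightarrow>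
                 integral {a..b} (\<lambda>t. \<eta> t * E t) = 0"
  shows "\<forall>t\<in>{a..b}. E t = 0"
proof -
  define w where "w t = (t - a) * (b - t)" for t
  have "polynomial_function (\<lambda>t::real. t - a)" "polynomial_function (\<lambda>t::real. b - t)"
    by (intro polynomial_function_diff polynomial_function_id polynomial_function_const)+
  from polynomial_function_mult[OF this] have w: "polynomial_function w"
    unfolding w_def by simp
  have "\<forall>t\<in>{a..b}. w t * E t = 0"
  proof (rule polynomial_orthogonal_imp_zero[OF \<open>a < b\<close>])
    show "continuous_on {a..b} (\<lambda>t. w t * E t)" unfolding w_def by (intro continuous_intros E)
    fix P :: "real \<Rightarrow> real" assume "polynomial_function P"
    then have "polynomial_function (\<lambda>t. P t * w t)"
      using polynomial_function_mult[OF _ w] by simp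
    then have "integral {a..b} (\<lambda>t. (P t * w t) * E t) = 0"
      by (rule orth) (simp_all add: w_def)
    then show "integral {a..b} (\<lambda>t. P t * (w t * E t)) = 0" by (simp add: mult_ac)
  qed
  then have "E t = 0" if "t \<in> {a<..<b}" for t using that by (auto simp: w_def)
  moreover have "continuous_on (closure {a<..<b}) E" using E \<open>a < b\<close> by simp
  ultimately show ?thesis
    using continuous_constant_on_closure[of "{a<..<b}" E 0] \<open>a < b\<close> by auto
qed

lemma DERIV_along_line_partials:
  fixes L L2 L3 :: "real \<Rightarrow> real \<Rightarrow> real"
  assumes L2: "\<And>u v. ((\<lambda>w. L w v) has_real_derivative L2 u v) (at u)"
    and L3: "\<And>u v. ((\<lambda>w. L u w) has_real_derivative L3 u v) (at v)"
    and L3_cont: "continuous_on UNIV (\<lambda>(u, v). L3 u v)"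
  shows "((\<lambda>e. L (p + e * q) (r + e * s)) has_real_derivative
           L2 (p + e0 * q) (r + e0 * s) * q + L3 (p + e0 * q) (r + e0 * s) * s) (at e0)"
proof -
  define u0 v0 where "u0 = p + e0 * q" and "v0 = r + e0 * s"
  have "continuous (at (u0, v0)) (\<lambda>(u, v). blinfun_mult_right (L3 u v))"
    using L3_cont unfolding continuous_on_eq_continuous_at[OF open_UNIV]
    by (auto simp: case_prod_unfold intro: continuous_intros)
  then have "((\<lambda>(u, v). L u v) has_derivative
      (\<lambda>(du, dv). L2 u0 v0 * du + blinfun_mult_right (L3 u0 v0) dv)) (at (u0, v0) within UNIV \<times> UNIV)"
    using L2[where u=u0 and v=v0] L3 by (intro has_derivative_partialsI) (auto simp: has_field_derivative_def)
  then have "((\<lambda>(u, v). L u v) has_derivative (\<lambda>(du, dv). L2 u0 v0 * du + L3 u0 v0 * dv))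
      (at (p + e0 * q, r + e0 * s))"
    by (simp add: u0_def v0_def)
  moreover have "((\<lambda>e. (p + e * q, r + e * s)) has_derivative (\<lambda>h. (h * q, h * s))) (at e0)"
    by (auto intro!: derivative_eq_intros)
  ultimately have "((\<lambda>e. L (p + e * q) (r + e * s)) has_derivative
      (\<lambda>h. L2 u0 v0 * (h * q) + L3 u0 v0 * (h * s))) (at e0)"
    using diff_chain_at by (fastforce simp: o_def)
  then show ?thesis unfolding has_field_derivative_def u0_def v0_def
    by (rule has_derivative_eq_rhs) (auto simp: algebra_simps)
qed

lemma polynomial_function_imp_C1_on:
  assumes "polynomial_function (\<eta> :: real \<Rightarrow> real)"
  shows "C1_on a b \<eta>"
proof -
  obtain \<eta>' where "polynomial_function \<eta>'" "\<And>t. (\<eta> has_vector_derivative \<eta>' t) (at t)"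
    using has_vector_derivative_polynomial_function[OF assms] by blast
  then show ?thesis
    unfolding C1_on_def has_real_derivative_iff_has_vector_derivative
    by (intro exI[of _ \<eta>']) (auto intro: continuous_on_polymonial_function has_vector_derivative_at_within)
qed

lemma continuous_on_compose3:
  fixes F :: "real \<Rightarrow> real \<Rightarrow> real \<Rightarrow> real" and S :: "'a::topological_space set"
  assumes F: "continuous_on ({a..b} \<times> UNIV \<times> UNIV) (\<lambda>(t, u, v). F t u v)"
    and "continuous_on S p" "continuous_on S q" "continuous_on S r"
    and "\<And>z. z \<in> S \<Longrightarrow> p z \<in> {a..b}"
  shows "continuous_on S (\<lambda>z. F (p z) (q z) (r z))"
proof -
  have "continuous_on S (\<lambda>z. (p z, q z, r z))" by (intro continuous_on_Pair assms)
  moreover have "(\<lambda>z. (p z, q z, r z)) ` S \<subseteq> {a..b} \<times> UNIV \<times> UNIV" using assms by auto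
  ultimately show ?thesis using continuous_on_compose2[OF F] by fastforce
qed

locale fractional_lagrangian =
  fixes a b \<alpha> \<rho> :: real and L L2 L3 :: "real \<Rightarrow> real \<Rightarrow> real \<Rightarrow> real"
  assumes a_pos: "0 < a" and a_less_b: "a < b" and alpha_pos: "0 < \<alpha>" and alpha_less_1: "\<alpha> < 1"
    and rho_pos: "0 < \<rho>"
    and L_cont: "continuous_on ({a..b} \<times> UNIV \<times> UNIV) (\<lambda>(t, u, v). L t u v)"
    and L2_deriv: "\<And>t u v. t \<in> {a..b} \<Longrightarrow> ((\<lambda>w. L t w v) has_real_derivative L2 t u v) (at u)"
    and L3_deriv: "\<And>t u v. t \<in> {a..b} \<Longrightarrow> ((\<lambda>w. L t u w) has_real_derivative L3 t u v) (at v)"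
    and L2_cont: "continuous_on ({a..b} \<times> UNIV \<times> UNIV) (\<lambda>(t, u, v). L2 t u v)"
    and L3_cont: "continuous_on ({a..b} \<times> UNIV \<times> UNIV) (\<lambda>(t, u, v). L3 t u v)"
begin

lemmas params = a_pos a_less_b rho_pos alpha_pos[THEN less_imp_le] alpha_less_1

lemma functional_J_variation:
  assumes x: "C1_on a b x" and \<eta>: "C1_on a b \<eta>"
  shows "((\<lambda>e. functional_J \<alpha> \<rho> a b L (\<lambda>t. x t + e * \<eta> t)) has_real_derivative
           integral {a..b} (\<lambda>t. L2 t (x t) (caputo \<alpha> \<rho> a b x t) * \<eta> t
                              + L3 t (x t) (caputo \<alpha> \<rho> a b x t) * caputo \<alpha> \<rho> a b \<eta> t)) (at 0)"
proof -
  define X Y where "X = caputo \<alpha> \<rho> a b x" and "Y = caputo \<alpha> \<rho> a b \<eta>"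
  have cont: "continuous_on {a..b} x" "continuous_on {a..b} \<eta>" "continuous_on {a..b} X" "continuous_on {a..b} Y"
    using C1_on_imp_continuous_on continuous_on_caputo x \<eta> params by (auto simp: X_def Y_def)
  have J_eq: "functional_J \<alpha> \<rho> a b L (\<lambda>t. x t + e * \<eta> t)
      = integral (cbox a b) (\<lambda>t. L t (x t + e * \<eta> t) (X t + e * Y t))" for e
    unfolding functional_J_def X_def Y_def
    by (auto intro!: integral_cong simp: caputo_add_scaled[OF x \<eta> params])
  define D where "D e t = L2 t (x t + e * \<eta> t) (X t + e * Y t) * \<eta> t
      + L3 t (x t + e * \<eta> t) (X t + e * Y t) * Y t" for e t
  have "((\<lambda>e. integral (cbox a b) (\<lambda>t. L t (x t + e * \<eta> t) (X t + e * Y t))) has_real_derivative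
      integral (cbox a b) (D 0)) (at 0 within UNIV)"
  proof (rule leibniz_rule_field_derivative)
    fix e t assume "t \<in> cbox a b"
    then have t: "t \<in> {a..b}" by simp
    have "continuous_on UNIV (\<lambda>z. L3 t (fst z) (snd z))"
      using t by (intro continuous_on_compose3[OF L3_cont] continuous_intros) auto
    then show "((\<lambda>e. L t (x t + e * \<eta> t) (X t + e * Y t)) has_real_derivative D e t) (at e within UNIV)"
      unfolding D_def using L2_deriv[OF t] L3_deriv[OF t]
      by (intro DERIV_along_line_partials) (auto simp: case_prod_unfold)
  next
    fix e :: real
    have "continuous_on {a..b} (\<lambda>t. L t (x t + e * \<eta> t) (X t + e * Y t))"
      using cont by (intro continuous_on_compose3[OF L_cont] continuous_intros) auto
    then show "(\<lambda>t. L t (x t + e * \<eta> t) (X t + e * Y t)) integrable_on cbox a b"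
      by (simp add: integrable_continuous_interval)
  next
    have "continuous_on (UNIV \<times> {a..b}) (\<lambda>z. D (fst z) (snd z))"
      unfolding D_def using cont
      by (intro continuous_intros continuous_on_compose3[OF L2_cont] continuous_on_compose3[OF L3_cont]
          continuous_on_compose2[OF _ continuous_on_snd]) auto
    then show "continuous_on (UNIV \<times> cbox a b) (\<lambda>(e, t). D e t)" by (simp add: case_prod_unfold)
  qed auto
  then show ?thesis unfolding J_eq by (simp add: D_def[abs_def] X_def Y_def)
qed

lemma local_minimizer_variation_zero:
  assumes min: "local_minimizer_on \<alpha> \<rho> a b (functional_J \<alpha> \<rho> a b L)
                  {y. C1_on a b y \<and> y a = xa \<and> y b = xb} x"
    and \<eta>: "C1_on a b \<eta>" "\<eta> a = 0" "\<eta> b = 0"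
  shows "integral {a..b} (\<lambda>t. L2 t (x t) (caputo \<alpha> \<rho> a b x t) * \<eta> t
                             + L3 t (x t) (caputo \<alpha> \<rho> a b x t) * caputo \<alpha> \<rho> a b \<eta> t) = 0"
proof -
  obtain \<delta> where "0 < \<delta>" and x: "C1_on a b x" "x a = xa" "x b = xb"
    and x_min: "\<And>y. C1_on a b y \<Longrightarrow> y a = xa \<Longrightarrow> y b = xb \<Longrightarrow> C1norm \<alpha> \<rho> a b (\<lambda>t. y t - x t) < \<delta> \<Longrightarrow>
      functional_J \<alpha> \<rho> a b L x \<le> functional_J \<alpha> \<rho> a b L y"
    using min unfolding local_minimizer_on_def by auto
  define d where "d = \<delta> / (\<bar>C1norm \<alpha> \<rho> a b \<eta>\<bar> + 1)"
  have "0 < d" using \<open>0 < \<delta>\<close> by (simp add: d_def add_nonneg_pos)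
  moreover have "\<forall>e. \<bar>0 - e\<bar> < d \<longrightarrow> functional_J \<alpha> \<rho> a b L (\<lambda>t. x t + 0 * \<eta> t)
      \<le> functional_J \<alpha> \<rho> a b L (\<lambda>t. x t + e * \<eta> t)"
  proof (intro allI impI)
    fix e :: real assume "\<bar>0 - e\<bar> < d"
    have "C1norm \<alpha> \<rho> a b (\<lambda>t. e * \<eta> t) \<le> \<bar>e\<bar> * \<bar>C1norm \<alpha> \<rho> a b \<eta>\<bar>"
      using C1norm_scaled_le[OF \<eta>(1) params, of e] abs_ge_self[of "C1norm \<alpha> \<rho> a b \<eta>"]
      by (meson abs_ge_zero mult_left_mono order_trans)
    also have "\<dots> \<le> \<bar>e\<bar> * (\<bar>C1norm \<alpha> \<rho> a b \<eta>\<bar> + 1)" by (simp add: mult_left_mono)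
    also have "\<dots> < d * (\<bar>C1norm \<alpha> \<rho> a b \<eta>\<bar> + 1)"
      using \<open>\<bar>0 - e\<bar> < d\<close> by (intro mult_strict_right_mono) auto
    also have "\<dots> = \<delta>" by (simp add: d_def add_nonneg_pos)
    finally have "C1norm \<alpha> \<rho> a b (\<lambda>t. (x t + e * \<eta> t) - x t) < \<delta>" by simp
    then show "functional_J \<alpha> \<rho> a b L (\<lambda>t. x t + 0 * \<eta> t) \<le> functional_J \<alpha> \<rho> a b L (\<lambda>t. x t + e * \<eta> t)"
      using x_min[OF C1_on_add_scaled[OF x(1) \<eta>(1)]] x \<eta> by simp
  qed
  ultimately show ?thesis by (rule DERIV_local_min[OF functional_J_variation[OF x(1) \<eta>(1)]])
qed

lemma euler_lagrange_weak:
  assumes min: "local_minimizer_on \<alpha> \<rho> a b (functional_J \<alpha> \<rho> a b L)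
                  {y. C1_on a b y \<and> y a = xa \<and> y b = xb} x"
    and g_def: "g = (\<lambda>t. L3 t (x t) (caputo \<alpha> \<rho> a b x t))"
    and R_diff: "\<forall>t\<in>{a..b}. right_int \<alpha> \<rho> b g differentiable (at t within {a..b})"
    and rightD_cont: "continuous_on {a..b} (rightD \<alpha> \<rho> a b g)"
    and \<eta>: "C1_on a b \<eta>" "\<eta> a = 0" "\<eta> b = 0"
  shows "integral {a..b} (\<lambda>t. \<eta> t * (L2 t (x t) (caputo \<alpha> \<rho> a b x t) - rightD \<alpha> \<rho> a b g t)) = 0"
proof -
  define F where "F t = L2 t (x t) (caputo \<alpha> \<rho> a b x t)" for t
  have x: "C1_on a b x" using min by (simp add: local_minimizer_on_def)
  have cont: "continuous_on {a..b} x" "continuous_on {a..b} (caputo \<alpha> \<rho> a b x)"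
    "continuous_on {a..b} \<eta>" "continuous_on {a..b} (caputo \<alpha> \<rho> a b \<eta>)"
    using C1_on_imp_continuous_on continuous_on_caputo x \<eta>(1) params by auto
  have F: "continuous_on {a..b} F" and g: "continuous_on {a..b} g"
    unfolding F_def g_def using cont
    by (auto intro!: continuous_on_compose3[OF L2_cont] continuous_on_compose3[OF L3_cont] continuous_intros)
  have "0 = integral {a..b} (\<lambda>t. F t * \<eta> t + g t * caputo \<alpha> \<rho> a b \<eta> t)"
    using local_minimizer_variation_zero[OF min \<eta>] by (simp add: F_def g_def)
  also have "\<dots> = integral {a..b} (\<lambda>t. F t * \<eta> t) + integral {a..b} (\<lambda>t. g t * caputo \<alpha> \<rho> a b \<eta> t)"
    using cont F g by (simp add: integral_add integrable_continuous_interval continuous_on_mult)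
  also have "\<dots> = integral {a..b} (\<lambda>t. \<eta> t * F t) - integral {a..b} (\<lambda>t. \<eta> t * rightD \<alpha> \<rho> a b g t)"
    using caputo_integration_by_parts[OF a_pos a_less_b rho_pos alpha_pos alpha_less_1 \<eta> g R_diff rightD_cont]
    by (simp add: mult.commute)
  also have "\<dots> = integral {a..b} (\<lambda>t. \<eta> t * (F t - rightD \<alpha> \<rho> a b g t))"
    using cont F rightD_cont
    by (simp add: right_diff_distrib integral_diff integrable_continuous_interval continuous_on_mult)
  finally show ?thesis by (simp add: F_def)
qed

end

theorem mainTheorem2:
  fixes a b \<alpha> \<rho> xa xb :: real
    and L L2 L3 :: "real \<Rightarrow> real \<Rightarrow> real \<Rightarrow> real"
    and x :: "real \<Rightarrow> real"
  assumes "0 < a" "a < b" "0 < \<alpha>" "\<alpha> < 1" "0 < \<rho>"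
    and L_cont: "continuous_on ({a..b} \<times> UNIV \<times> UNIV) (\<lambda>(t, u, v). L t u v)"
    and L2_deriv: "\<And>t u v. t \<in> {a..b} \<Longrightarrow> ((\<lambda>w. L t w v) has_real_derivative L2 t u v) (at u)"
    and L3_deriv: "\<And>t u v. t \<in> {a..b} \<Longrightarrow> ((\<lambda>w. L t u w) has_real_derivative L3 t u v) (at v)"
    and L2_cont: "continuous_on ({a..b} \<times> UNIV \<times> UNIV) (\<lambda>(t, u, v). L2 t u v)"
    and L3_cont: "continuous_on ({a..b} \<times> UNIV \<times> UNIV) (\<lambda>(t, u, v). L3 t u v)"
    and rightD_ok: "\<And>y. C1_on a b y \<Longrightarrow>
        (\<forall>t\<in>{a..b}. right_int \<alpha> \<rho> b (\<lambda>\<tau>. L3 \<tau> (y \<tau>) (caputo \<alpha> \<rho> a b y \<tau>))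
                        differentiable (at t within {a..b}))
      \<and> continuous_on {a..b} (rightD \<alpha> \<rho> a b (\<lambda>\<tau>. L3 \<tau> (y \<tau>) (caputo \<alpha> \<rho> a b y \<tau>)))"
    and min: "local_minimizer_on \<alpha> \<rho> a b (functional_J \<alpha> \<rho> a b L)
               {y. C1_on a b y \<and> y a = xa \<and> y b = xb} x"
  shows "\<forall>t\<in>{a..b}. L2 t (x t) (caputo \<alpha> \<rho> a b x t)
           - rightD \<alpha> \<rho> a b (\<lambda>\<tau>. L3 \<tau> (x \<tau>) (caputo \<alpha> \<rho> a b x \<tau>)) t = 0"
proof -
  interpret fractional_lagrangian a b \<alpha> \<rho> L L2 L3
    using assms by unfold_locales
  define g where "g = (\<lambda>\<tau>. L3 \<tau> (x \<tau>) (caputo \<alpha> \<rho> a b x \<tau>))"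
  have x: "C1_on a b x" using min by (simp add: local_minimizer_on_def)
  have R_diff: "\<forall>t\<in>{a..b}. right_int \<alpha> \<rho> b g differentiable (at t within {a..b})"
    and rightD_cont: "continuous_on {a..b} (rightD \<alpha> \<rho> a b g)"
    using rightD_ok[OF x] unfolding g_def by auto
  have "continuous_on {a..b} (\<lambda>t. L2 t (x t) (caputo \<alpha> \<rho> a b x t) - rightD \<alpha> \<rho> a b g t)"
    using C1_on_imp_continuous_on[OF x] continuous_on_caputo[OF x params] rightD_cont
    by (intro continuous_on_diff continuous_on_compose3[OF L2_cont]) (auto intro: continuous_on_id)
  then have "\<forall>t\<in>{a..b}. L2 t (x t) (caputo \<alpha> \<rho> a b x t) - rightD \<alpha> \<rho> a b g t = 0"
    using euler_lagrange_weak[OF min g_def R_diff rightD_cont polynomial_function_imp_C1_on]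
    by (intro fundamental_lemma_polynomial[OF \<open>a < b\<close>])
  then show ?thesis by (simp add: g_def)
qed

end
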